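(* Let $\mathscr F$ be a universally separable class of functions $\Omega\to[0,1]$, $\varepsilon>0$ and $d\in\mathbb N$. The following are equivalent: (1) $\mathrm{fat}_\varepsilon(\mathscr F\,\mathrm{mod}\,\omega_1)\le d$; (2) there is a countable set $N\subseteq\Omega$ such that $\mathrm{fat}_\varepsilon(\mathscr F\restriction(\Omega\setminus N))\le d$.
   Context: $\mathscr F$ is universally separable if it has a countable subfamily $\mathscr F'$ such that every $f\in\mathscr F$ is a pointwise limit of a sequence from $\mathscr F'$. A finite $A\subseteq X$ is $\varepsilon$-fat shattered by $\mathscr F$ if there is $h:A\to[0,1]$ such that for every $B\subseteq A$ some $f_B\in\mathscr F$ has $f_B(a)>h(a)+\varepsilon$ for $a\in B$ and $f_B(a)<h(a)-\varepsilon$ for $a\in A\setminus B$; $\mathrm{fat}_\varepsilon(\mathscr F\restriction X)$ is the supremum of sizes of such $A\subseteq X$. $\mathrm{fat}_\varepsilon(\mathscr F\,\mathrm{mod}\,\omega_1)$ is the supremum of $n$ for which there exist uncountable $A_1,\dots,A_n\subseteq\Omega$ and $h:\{1,\dots,n\}\to[0,1]$ such that for every $J\subseteq\{1,\dots,n\}$ there is $f_J\in\mathscr F$ with $f_J(x)>h(i)+\varepsilon$ whenever $i\in J$, $x\in A_i$, and $f_J(x)<h(i)-\varepsilon$ whenever $i\notin J$, $x\in A_i$. *)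

theory Defs
  imports "HOL-Analysis.Analysis" "HOL-Library.Extended_Nat"
begin

text \<open>The ground set \<Omega> is the universe of the type 'a; a class of functions is a set
  of functions 'a \<Rightarrow> real.\<close>

definition universally_separable :: "('a \<Rightarrow> real) set \<Rightarrow> bool" where
  "universally_separable F \<longleftrightarrow>
     (\<exists>F'. F' \<subseteq> F \<and> countable F' \<and>
        (\<forall>f\<in>F. \<exists>s :: nat \<Rightarrow> 'a \<Rightarrow> real. (\<forall>n. s n \<in> F') \<and>
                   (\<forall>x. (\<lambda>n. s n x) \<longlonglongrightarrow> f x)))"

definition fat_shattered :: "('a \<Rightarrow> real) set \<Rightarrow> real \<Rightarrow> 'a set \<Rightarrow> bool" where
  "fat_shattered F \<epsilon> A \<longleftrightarrow> finite A \<and>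
     (\<exists>h :: 'a \<Rightarrow> real. (\<forall>a\<in>A. 0 \<le> h a \<and> h a \<le> 1) \<and>
        (\<forall>B\<subseteq>A. \<exists>f\<in>F. (\<forall>a\<in>B. f a > h a + \<epsilon>) \<and> (\<forall>a\<in>A - B. f a < h a - \<epsilon>)))"

definition fat_on :: "('a \<Rightarrow> real) set \<Rightarrow> real \<Rightarrow> 'a set \<Rightarrow> enat" where
  "fat_on F \<epsilon> X = Sup {enat (card A) | A. A \<subseteq> X \<and> fat_shattered F \<epsilon> A}"

definition fat_mod_omega1 :: "('a \<Rightarrow> real) set \<Rightarrow> real \<Rightarrow> enat" where
  "fat_mod_omega1 F \<epsilon> = Sup {enat n | n.
     \<exists>(A :: nat \<Rightarrow> 'a set) (h :: nat \<Rightarrow> real).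
       (\<forall>i\<in>{1..n}. uncountable (A i) \<and> 0 \<le> h i \<and> h i \<le> 1) \<and>
       (\<forall>J\<subseteq>{1..n}. \<exists>f\<in>F. \<forall>i\<in>{1..n}. \<forall>x\<in>A i.
          (i \<in> J \<longrightarrow> f x > h i + \<epsilon>) \<and> (i \<notin> J \<longrightarrow> f x < h i - \<epsilon>))}"

end

theory Submission
  imports Defs
begin

(* (2) ==> (1): sets A_1..A_n shattered modulo omega_1 are pairwise disjoint (a point cannot
   be above the i-band and below the j-band under one witness and the reverse under
   another), so choosing a point of each uncountable A_i outside the countable set N gives
   n distinct points that are fat-shattered in the ordinary sense.

   (1) ==> (2): the strict inequalities are open conditions, so a finite fat-shattering can
   be realised with rational thresholds and with witnesses from the countable family F'
   of universal separability.  Such data form a "code"; its i-th cell is the set of points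
   on which the code's witnesses follow the pattern prescribed at position i.  There are
   countably many codes, and N is taken to be the union of all countable cells.  A finite
   set outside N that is fat-shattered is coded by cells that are all uncountable, and
   these cells shatter modulo omega_1; hence its size is at most d. *)

definition beyond :: "real \<Rightarrow> real \<Rightarrow> bool \<Rightarrow> real \<Rightarrow> bool" where
  "beyond \<epsilon> t b y \<longleftrightarrow> (b \<longrightarrow> t + \<epsilon> < y) \<and> (\<not> b \<longrightarrow> y < t - \<epsilon>)"

lemma eventually_beyond_value:
  assumes "beyond \<epsilon> t b y" and "(g \<longlongrightarrow> y) F"
  shows "eventually (\<lambda>n. beyond \<epsilon> t b (g n)) F"
proof (cases b)
  case True
  then show ?thesis
    using order_tendstoD(1)[OF assms(2)] assms(1) by (auto simp: beyond_def elim: eventually_mono)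
next
  case False
  then show ?thesis
    using order_tendstoD(2)[OF assms(2)] assms(1) by (auto simp: beyond_def elim: eventually_mono)
qed

lemma eventually_beyond_threshold:
  assumes "beyond \<epsilon> t b y"
  shows "eventually (\<lambda>s. beyond \<epsilon> s b y) (nhds t)"
proof (cases b)
  case True
  then have "t < y - \<epsilon>" using assms by (simp add: beyond_def)
  from order_tendstoD(2)[OF filterlim_ident this] show ?thesis
    using True by (auto simp: beyond_def elim: eventually_mono)
next
  case False
  then have "y + \<epsilon> < t" using assms by (simp add: beyond_def)
  from order_tendstoD(1)[OF filterlim_ident this] show ?thesis
    using False by (auto simp: beyond_def elim: eventually_mono)
qed

lemma finite_pattern_pointwise_limit:
  assumes "finite A" and "\<forall>a\<in>A. beyond \<epsilon> (h a) (b a) (f a)"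
    and "\<forall>a. (\<lambda>n. s n a) \<longlonglongrightarrow> f a"
  shows "\<exists>n. \<forall>a\<in>A. beyond \<epsilon> (h a) (b a) (s n a)"
proof -
  have "eventually (\<lambda>n. \<forall>a\<in>A. beyond \<epsilon> (h a) (b a) (s n a)) sequentially"
    using assms by (intro eventually_ball_finite ballI eventually_beyond_value) auto
  then obtain M where "\<forall>n\<ge>M. \<forall>a\<in>A. beyond \<epsilon> (h a) (b a) (s n a)"
    unfolding eventually_sequentially by blast
  then show ?thesis by blast
qed

lemma finite_pattern_rational_threshold:
  assumes "finite I" and "\<forall>i\<in>I. beyond \<epsilon> t (b i) (y i)"
  shows "\<exists>r\<in>\<rat>. \<forall>i\<in>I. beyond \<epsilon> r (b i) (y i)"
proof -
  have "eventually (\<lambda>s. \<forall>i\<in>I. beyond \<epsilon> s (b i) (y i)) (nhds t)"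
    using assms by (intro eventually_ball_finite ballI eventually_beyond_threshold) auto
  then obtain \<delta> where "\<delta> > 0" and \<delta>: "\<forall>s. dist s t < \<delta> \<longrightarrow> (\<forall>i\<in>I. beyond \<epsilon> s (b i) (y i))"
    unfolding eventually_nhds_metric by blast
  obtain r where "r \<in> \<rat>" "t - \<delta> < r" "r < t + \<delta>"
    using Rats_dense_in_real[of "t - \<delta>" "t + \<delta>"] \<open>\<delta> > 0\<close> by auto
  moreover have "dist r t < \<delta>" using \<open>t - \<delta> < r\<close> \<open>r < t + \<delta>\<close> by (simp add: dist_real_def)
  ultimately show ?thesis using \<delta> by blast
qed

lemma fat_shattered_beyond:
  "fat_shattered F \<epsilon> A \<longleftrightarrow> finite A \<and>
     (\<exists>h. (\<forall>a\<in>A. 0 \<le> h a \<and> h a \<le> 1) \<and>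
          (\<forall>B\<subseteq>A. \<exists>f\<in>F. \<forall>a\<in>A. beyond \<epsilon> (h a) (a \<in> B) (f a)))"
  unfolding fat_shattered_def beyond_def by (intro conj_cong refl ex_cong all_cong) blast

definition omega1_shattered ::
    "('a \<Rightarrow> real) set \<Rightarrow> real \<Rightarrow> nat \<Rightarrow> (nat \<Rightarrow> 'a set) \<Rightarrow> (nat \<Rightarrow> real) \<Rightarrow> bool" where
  "omega1_shattered F \<epsilon> n A h \<longleftrightarrow>
     (\<forall>i\<in>{1..n}. uncountable (A i) \<and> 0 \<le> h i \<and> h i \<le> 1) \<and>
     (\<forall>J\<subseteq>{1..n}. \<exists>f\<in>F. \<forall>i\<in>{1..n}. \<forall>x\<in>A i. beyond \<epsilon> (h i) (i \<in> J) (f x))"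

lemma omega1_shattered_witness:
  assumes "omega1_shattered F \<epsilon> n A h" and "J \<subseteq> {1..n}"
  shows "\<exists>f\<in>F. \<forall>i\<in>{1..n}. \<forall>x\<in>A i. beyond \<epsilon> (h i) (i \<in> J) (f x)"
  using assms unfolding omega1_shattered_def by blast

lemma fat_mod_omega1_le_iff:
  "fat_mod_omega1 F \<epsilon> \<le> enat d \<longleftrightarrow> (\<forall>n A h. omega1_shattered F \<epsilon> n A h \<longrightarrow> n \<le> d)"
proof -
  have "fat_mod_omega1 F \<epsilon> = Sup (enat ` {n. \<exists>A h. omega1_shattered F \<epsilon> n A h})"
    unfolding fat_mod_omega1_def omega1_shattered_def beyond_def by (rule arg_cong[where f=Sup]) auto
  then show ?thesis by (auto simp: Sup_le_iff)
qed

lemma fat_on_le_iff: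
  "fat_on F \<epsilon> X \<le> enat d \<longleftrightarrow> (\<forall>A\<subseteq>X. fat_shattered F \<epsilon> A \<longrightarrow> card A \<le> d)"
proof -
  have "fat_on F \<epsilon> X = Sup ((enat \<circ> card) ` {A. A \<subseteq> X \<and> fat_shattered F \<epsilon> A})"
    unfolding fat_on_def by (rule arg_cong[where f=Sup]) auto
  then show ?thesis by (auto simp: Sup_le_iff)
qed

text \<open>The sets shattered modulo \<omega>_1 are pairwise disjoint: a common point x of A_i and
  A_j would lie above the i-band and below the j-band for the witness of {i}, and the
  other way round for the witness of {j}.\<close>
lemma omega1_shattered_disjoint:
  assumes "\<epsilon> \<ge> 0" and sh: "omega1_shattered F \<epsilon> n A h"
    and "i \<in> {1..n}" "j \<in> {1..n}" "i \<noteq> j"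
  shows "A i \<inter> A j = {}"
proof (rule ccontr)
  assume "A i \<inter> A j \<noteq> {}"
  then obtain x where "x \<in> A i" "x \<in> A j" by blast
  have split: "\<exists>f. beyond \<epsilon> (h i) (i \<in> J) (f x) \<and> beyond \<epsilon> (h j) (j \<in> J) (f x)"
    if J: "J \<subseteq> {1..n}" for J
  proof -
    obtain f where "\<forall>k\<in>{1..n}. \<forall>y\<in>A k. beyond \<epsilon> (h k) (k \<in> J) (f y)"
      using omega1_shattered_witness[OF sh J] by blast
    then show ?thesis using \<open>x \<in> A i\<close> \<open>x \<in> A j\<close> assms(3,4) by blast
  qed
  obtain f1 where "beyond \<epsilon> (h i) True (f1 x)" "beyond \<epsilon> (h j) False (f1 x)"
    using split[of "{i}"] assms(3,5) by auto
  moreover obtain f2 where "beyond \<epsilon> (h i) False (f2 x)" "beyond \<epsilon> (h j) True (f2 x)"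
    using split[of "{j}"] assms(4,5) by auto
  ultimately show False using \<open>\<epsilon> \<ge> 0\<close> unfolding beyond_def by simp
qed

lemma transversal_fat_shattered:
  assumes sh: "omega1_shattered F \<epsilon> n A h"
    and inj: "inj_on a {1..n}" and a: "\<forall>i\<in>{1..n}. a i \<in> A i"
  shows "fat_shattered F \<epsilon> (a ` {1..n})"
  unfolding fat_shattered_beyond
proof (intro conjI exI[of _ "h \<circ> inv_into {1..n} a"] ballI allI impI)
  show "finite (a ` {1..n})" by simp
next
  fix x assume "x \<in> a ` {1..n}"
  then show "0 \<le> (h \<circ> inv_into {1..n} a) x" "(h \<circ> inv_into {1..n} a) x \<le> 1"
    using sh inj unfolding omega1_shattered_def by auto
next
  fix B
  define J where "J = {i\<in>{1..n}. a i \<in> B}"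
  have "J \<subseteq> {1..n}" unfolding J_def by blast
  then obtain f where "f \<in> F" and f: "\<forall>i\<in>{1..n}. \<forall>x\<in>A i. beyond \<epsilon> (h i) (i \<in> J) (f x)"
    using omega1_shattered_witness[OF sh] by blast
  have "beyond \<epsilon> ((h \<circ> inv_into {1..n} a) (a i)) (a i \<in> B) (f (a i))" if "i \<in> {1..n}" for i
    using f a inj that unfolding J_def by auto
  then show "\<exists>f\<in>F. \<forall>x\<in>a ` {1..n}. beyond \<epsilon> ((h \<circ> inv_into {1..n} a) x) (x \<in> B) (f x)"
    using \<open>f \<in> F\<close> by blast
qed

text \<open>Direction (2) \<Longrightarrow> (1): every \<omega>_1-shattering has a transversal avoiding the
  countable set N.\<close>
lemma fat_mod_omega1_le_of_countable_exception:
  assumes "\<epsilon> \<ge> 0" and "countable N" and fat: "fat_on F \<epsilon> (UNIV - N) \<le> enat d"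
  shows "fat_mod_omega1 F \<epsilon> \<le> enat d"
  unfolding fat_mod_omega1_le_iff
proof (intro allI impI)
  fix n A h assume sh: "omega1_shattered F \<epsilon> n A h"
  have "\<forall>i\<in>{1..n}. \<exists>x. x \<in> A i - N"
  proof
    fix i assume "i \<in> {1..n}"
    then have "\<not> A i \<subseteq> N"
      using sh countable_subset[of "A i" N] \<open>countable N\<close> unfolding omega1_shattered_def by blast
    then show "\<exists>x. x \<in> A i - N" by blast
  qed
  then have "\<exists>a. \<forall>i\<in>{1..n}. a i \<in> A i - N" by (rule bchoice)
  then obtain a where a: "\<forall>i\<in>{1..n}. a i \<in> A i - N" by blast
  have inj: "inj_on a {1..n}"
  proof (rule inj_onI, rule ccontr)
    fix i j assume ij: "i \<in> {1..n}" "j \<in> {1..n}" "a i = a j" "i \<noteq> j"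
    then have "a i \<in> A i \<inter> A j" using a by (metis Diff_iff IntI)
    then show False using omega1_shattered_disjoint[OF \<open>\<epsilon> \<ge> 0\<close> sh ij(1,2,4)] by blast
  qed
  have "fat_shattered F \<epsilon> (a ` {1..n})"
    using transversal_fat_shattered[OF sh inj] a by blast
  moreover have "a ` {1..n} \<subseteq> UNIV - N" using a by blast
  ultimately have "card (a ` {1..n}) \<le> d" using fat by (simp add: fat_on_le_iff)
  then show "n \<le> d" using card_image[OF inj] by simp
qed

lemma dense_family_witness:
  assumes approx: "\<forall>f\<in>F. \<exists>s. (\<forall>n. s n \<in> F') \<and> (\<forall>x. (\<lambda>n. s n x) \<longlonglongrightarrow> f x)"
    and "finite A" and "f \<in> F" and "\<forall>a\<in>A. beyond \<epsilon> (h a) (b a) (f a)"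
  shows "\<exists>g\<in>F'. \<forall>a\<in>A. beyond \<epsilon> (h a) (b a) (g a)"
proof -
  obtain s where "\<forall>n. s n \<in> F'" and "\<forall>x. (\<lambda>n. s n x) \<longlonglongrightarrow> f x"
    using approx \<open>f \<in> F\<close> by blast
  then show ?thesis
    using finite_pattern_pointwise_limit[OF \<open>finite A\<close> assms(4)] by blast
qed

lemma rational_dense_shattering:
  assumes approx: "\<forall>f\<in>F. \<exists>s. (\<forall>n. s n \<in> F') \<and> (\<forall>x. (\<lambda>n. s n x) \<longlonglongrightarrow> f x)"
    and "finite A" and sh: "\<forall>B\<subseteq>A. \<exists>f\<in>F. \<forall>a\<in>A. beyond \<epsilon> (h a) (a \<in> B) (f a)"
  shows "\<exists>q g. (\<forall>a\<in>A. q a \<in> \<rat>) \<and> (\<forall>B\<subseteq>A. g B \<in> F') \<and>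
               (\<forall>B\<subseteq>A. \<forall>a\<in>A. beyond \<epsilon> (q a) (a \<in> B) (g B a))"
proof -
  have "\<forall>B\<in>Pow A. \<exists>g. g \<in> F' \<and> (\<forall>a\<in>A. beyond \<epsilon> (h a) (a \<in> B) (g a))"
  proof
    fix B assume "B \<in> Pow A"
    then obtain f where "f \<in> F" and f: "\<forall>a\<in>A. beyond \<epsilon> (h a) (a \<in> B) (f a)"
      using sh by blast
    show "\<exists>g. g \<in> F' \<and> (\<forall>a\<in>A. beyond \<epsilon> (h a) (a \<in> B) (g a))"
      using dense_family_witness[OF approx \<open>finite A\<close> \<open>f \<in> F\<close> f] by blast
  qed
  then have "\<exists>g. \<forall>B\<in>Pow A. g B \<in> F' \<and> (\<forall>a\<in>A. beyond \<epsilon> (h a) (a \<in> B) (g B a))"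
    by (rule bchoice)
  then obtain g where g: "\<forall>B\<in>Pow A. g B \<in> F' \<and> (\<forall>a\<in>A. beyond \<epsilon> (h a) (a \<in> B) (g B a))"
    by blast
  have "\<forall>a\<in>A. \<exists>r. r \<in> \<rat> \<and> (\<forall>B\<in>Pow A. beyond \<epsilon> r (a \<in> B) (g B a))"
  proof
    fix a assume "a \<in> A"
    then have "\<forall>B\<in>Pow A. beyond \<epsilon> (h a) (a \<in> B) (g B a)" using g by blast
    from finite_pattern_rational_threshold[OF _ this] \<open>finite A\<close>
    show "\<exists>r. r \<in> \<rat> \<and> (\<forall>B\<in>Pow A. beyond \<epsilon> r (a \<in> B) (g B a))" by blast
  qed
  then have "\<exists>q. \<forall>a\<in>A. q a \<in> \<rat> \<and> (\<forall>B\<in>Pow A. beyond \<epsilon> (q a) (a \<in> B) (g B a))"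
    by (rule bchoice)
  then obtain q where q: "\<forall>a\<in>A. q a \<in> \<rat> \<and> (\<forall>B\<in>Pow A. beyond \<epsilon> (q a) (a \<in> B) (g B a))"
    by blast
  show ?thesis
  proof (intro exI conjI)
    show "\<forall>a\<in>A. q a \<in> \<rat>" "\<forall>B\<subseteq>A. g B \<in> F'" using q g by auto
    show "\<forall>B\<subseteq>A. \<forall>a\<in>A. beyond \<epsilon> (q a) (a \<in> B) (g B a)" using q by blast
  qed
qed

text \<open>A code consists of a size m, rational thresholds for the positions 1..m and, for
  every J \<subseteq> {1..m}, a witness from F'.  Over a countable F' there are countably many.\<close>
type_synonym 'a code = "nat \<times> (nat \<Rightarrow> real) \<times> (nat set \<Rightarrow> 'a \<Rightarrow> real)"

definition codes :: "('a \<Rightarrow> real) set \<Rightarrow> 'a code set" where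
  "codes F' = (SIGMA m:UNIV. (\<Pi>\<^sub>E i\<in>{1..m}. \<rat>) \<times> (\<Pi>\<^sub>E J\<in>Pow {1..m}. F'))"

lemma countable_codes: "countable F' \<Longrightarrow> countable (codes F')"
  unfolding codes_def by (intro countable_SIGMA countable_PiE) (auto simp: countable_rat)

definition cell :: "real \<Rightarrow> 'a code \<Rightarrow> nat \<Rightarrow> 'a set" where
  "cell \<epsilon> c i = (case c of (m, q, g) \<Rightarrow> {x. \<forall>J\<subseteq>{1..m}. beyond \<epsilon> (q i) (i \<in> J) (g J x)})"

lemma mem_cell: "x \<in> cell \<epsilon> (m, q, g) i \<longleftrightarrow> (\<forall>J\<subseteq>{1..m}. beyond \<epsilon> (q i) (i \<in> J) (g J x))"
  by (simp add: cell_def)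

lemma coded_fat_shattered:
  assumes approx: "\<forall>f\<in>F. \<exists>s. (\<forall>n. s n \<in> F') \<and> (\<forall>x. (\<lambda>n. s n x) \<longlonglongrightarrow> f x)"
    and "fat_shattered F \<epsilon> A"
  shows "\<exists>c\<in>codes F'. fst c = card A \<and> (\<forall>i\<in>{1..card A}. cell \<epsilon> c i \<inter> A \<noteq> {})"
proof -
  obtain h where "finite A" and sh: "\<forall>B\<subseteq>A. \<exists>f\<in>F. \<forall>a\<in>A. beyond \<epsilon> (h a) (a \<in> B) (f a)"
    using assms(2) unfolding fat_shattered_beyond by blast
  obtain q g where q: "\<forall>a\<in>A. q a \<in> \<rat>" and g: "\<forall>B\<subseteq>A. g B \<in> F'"
    and pattern: "\<forall>B\<subseteq>A. \<forall>a\<in>A. beyond \<epsilon> (q a) (a \<in> B) (g B a)"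
    using rational_dense_shattering[OF approx \<open>finite A\<close> sh] by blast
  define m where "m = card A"
  obtain e where e: "bij_betw e {1..m} A"
    using ex_bij_betw_nat_finite_1[OF \<open>finite A\<close>] unfolding m_def by blast
  have eA: "e i \<in> A" if "i \<in> {1..m}" for i
    using e that by (auto dest: bij_betwE)
  have eJ: "e ` J \<subseteq> A" if "J \<subseteq> {1..m}" for J
    using eA that by blast
  define c where "c = (m, restrict (q \<circ> e) {1..m}, restrict (\<lambda>J. g (e ` J)) (Pow {1..m}))"
  have "restrict (q \<circ> e) {1..m} \<in> (\<Pi>\<^sub>E i\<in>{1..m}. \<rat>)"
    using q eA by (simp add: restrict_PiE_iff)
  moreover have "restrict (\<lambda>J. g (e ` J)) (Pow {1..m}) \<in> (\<Pi>\<^sub>E J\<in>Pow {1..m}. F')"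
    using g eJ by (simp add: restrict_PiE_iff)
  ultimately have "c \<in> codes F'" unfolding c_def codes_def by simp
  moreover have "e i \<in> cell \<epsilon> c i" if i: "i \<in> {1..m}" for i
  proof -
    have "beyond \<epsilon> (q (e i)) (i \<in> J) (g (e ` J) (e i))" if J: "J \<subseteq> {1..m}" for J
    proof -
      have "e i \<in> e ` J \<longleftrightarrow> i \<in> J"
        using bij_betw_imp_inj_on[OF e] i J by (auto simp: inj_on_eq_iff)
      moreover have "beyond \<epsilon> (q (e i)) (e i \<in> e ` J) (g (e ` J) (e i))"
        using pattern eJ[OF J] eA[OF i] by blast
      ultimately show ?thesis by simp
    qed
    then show ?thesis using i unfolding c_def mem_cell by simp
  qed
  moreover have "fst c = card A" unfolding c_def m_def by simp
  ultimately show ?thesis using eA unfolding m_def by blast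
qed

text \<open>A code all of whose cells are uncountable witnesses fat_\<epsilon>(F mod \<omega>_1) \<ge> m; the
  thresholds lie in [0,1] because the witnesses do and each cell is nonempty.\<close>
lemma code_omega1_shattered:
  assumes "\<epsilon> \<ge> 0" and "F' \<subseteq> F" and bounded: "\<forall>f\<in>F. \<forall>x. 0 \<le> f x \<and> f x \<le> 1"
    and "(m, q, g) \<in> codes F'" and uncountable: "\<forall>i\<in>{1..m}. uncountable (cell \<epsilon> (m, q, g) i)"
  shows "omega1_shattered F \<epsilon> m (cell \<epsilon> (m, q, g)) q"
proof -
  have gF: "g J \<in> F" if "J \<subseteq> {1..m}" for J
    using assms(2,4) that unfolding codes_def by (auto simp: PiE_iff)
  show ?thesis
    unfolding omega1_shattered_def
  proof (intro conjI ballI allI impI)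
    fix i assume i: "i \<in> {1..m}"
    then show "uncountable (cell \<epsilon> (m, q, g) i)" using uncountable by blast
    then obtain x where "x \<in> cell \<epsilon> (m, q, g) i" using uncountable_infinite by fastforce
    then have "beyond \<epsilon> (q i) (i \<in> {1..m}) (g {1..m} x)" "beyond \<epsilon> (q i) (i \<in> {}) (g {} x)"
      unfolding mem_cell by blast+
    moreover have "0 \<le> g {} x" "g {1..m} x \<le> 1" using bounded gF by auto
    ultimately show "0 \<le> q i" "q i \<le> 1" using i \<open>\<epsilon> \<ge> 0\<close> unfolding beyond_def by auto
  next
    fix J assume "J \<subseteq> {1..m}"
    with gF show "\<exists>f\<in>F. \<forall>i\<in>{1..m}. \<forall>x\<in>cell \<epsilon> (m, q, g) i. beyond \<epsilon> (q i) (i \<in> J) (f x)"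
      by (intro bexI[of _ "g J"] ballI) (auto simp: mem_cell)
  qed
qed

definition exceptional :: "real \<Rightarrow> ('a \<Rightarrow> real) set \<Rightarrow> 'a set" where
  "exceptional \<epsilon> F' = (\<Union>c\<in>codes F'. \<Union>i\<in>{i. countable (cell \<epsilon> c i)}. cell \<epsilon> c i)"

lemma countable_exceptional: "countable F' \<Longrightarrow> countable (exceptional \<epsilon> F')"
  unfolding exceptional_def by (intro countable_UN countable_codes) auto

text \<open>Direction (1) \<Longrightarrow> (2): outside the exceptional set every fat-shattered set is coded
  by uncountable cells, hence is no larger than fat_\<epsilon>(F mod \<omega>_1).\<close>
lemma fat_on_outside_exceptional:
  assumes "\<epsilon> \<ge> 0" and "F' \<subseteq> F" and bounded: "\<forall>f\<in>F. \<forall>x. 0 \<le> f x \<and> f x \<le> 1"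
    and approx: "\<forall>f\<in>F. \<exists>s. (\<forall>n. s n \<in> F') \<and> (\<forall>x. (\<lambda>n. s n x) \<longlonglongrightarrow> f x)"
    and fat: "fat_mod_omega1 F \<epsilon> \<le> enat d"
  shows "fat_on F \<epsilon> (UNIV - exceptional \<epsilon> F') \<le> enat d"
  unfolding fat_on_le_iff
proof (intro allI impI)
  fix A assume A: "A \<subseteq> UNIV - exceptional \<epsilon> F'" and "fat_shattered F \<epsilon> A"
  then obtain m q g where c: "(m, q, g) \<in> codes F'" and "m = card A"
    and meets: "\<forall>i\<in>{1..m}. cell \<epsilon> (m, q, g) i \<inter> A \<noteq> {}"
    using coded_fat_shattered[OF approx] by fastforce
  have "uncountable (cell \<epsilon> (m, q, g) i)" if "i \<in> {1..m}" for i
    using meets that A c unfolding exceptional_def by blast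
  then have "omega1_shattered F \<epsilon> m (cell \<epsilon> (m, q, g)) q"
    using code_omega1_shattered[OF assms(1-3) c] by blast
  then show "card A \<le> d" using fat \<open>m = card A\<close> unfolding fat_mod_omega1_le_iff by blast
qed

theorem mainTheorem14:
  fixes F :: "('a \<Rightarrow> real) set" and \<epsilon> :: real and d :: nat
  assumes "\<forall>f\<in>F. \<forall>x. 0 \<le> f x \<and> f x \<le> 1"
    and "universally_separable F"
    and "\<epsilon> > 0"
  shows "fat_mod_omega1 F \<epsilon> \<le> enat d \<longleftrightarrow>
         (\<exists>N. countable N \<and> fat_on F \<epsilon> (UNIV - N) \<le> enat d)"
proof
  have "\<epsilon> \<ge> 0" using assms(3) by simp
  obtain F' where "F' \<subseteq> F" and "countable F'"
    and approx: "\<forall>f\<in>F. \<exists>s. (\<forall>n. s n \<in> F') \<and> (\<forall>x. (\<lambda>n. s n x) \<longlonglongrightarrow> f x)"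
    using assms(2) unfolding universally_separable_def by blast
  assume "fat_mod_omega1 F \<epsilon> \<le> enat d"
  with fat_on_outside_exceptional[OF \<open>\<epsilon> \<ge> 0\<close> \<open>F' \<subseteq> F\<close> assms(1) approx]
  have "fat_on F \<epsilon> (UNIV - exceptional \<epsilon> F') \<le> enat d" .
  then show "\<exists>N. countable N \<and> fat_on F \<epsilon> (UNIV - N) \<le> enat d"
    using countable_exceptional[OF \<open>countable F'\<close>] by blast
next
  have "\<epsilon> \<ge> 0" using assms(3) by simp
  assume "\<exists>N. countable N \<and> fat_on F \<epsilon> (UNIV - N) \<le> enat d"
  then obtain N where "countable N" and "fat_on F \<epsilon> (UNIV - N) \<le> enat d" by blast
  then show "fat_mod_omega1 F \<epsilon> \<le> enat d"
    by (rule fat_mod_omega1_le_of_countable_exception[OF \<open>\<epsilon> \<ge> 0\<close>])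
qed

end
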